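(* Let $P$ be a finite $(3+1)$-free poset and let $a,b,c\in P$. Then: (i) if $a\approx b$ and $b\approx c$, then $a\approx c$; (ii) if $a\mathrel{\top} b$ and $b\approx c$, then $a\mathrel{\top} c$; (iii) if $a\mathrel{\bot} b$ and $b\approx c$, then $a\mathrel{\bot} c$; (iv) if $a\mathrel{\top} b$, then $U_a=U_b$; (v) if $a\mathrel{\bot} b$, then $D_a=D_b$; (vi) $v(a)$ and $v(b)$ are incomparable in the view order if and only if $a\mathrel{\top} b$ or $a\mathrel{\bot} b$; (vii) it is not the case that both $a\mathrel{\top} b$ and $b\mathrel{\bot} c$.
   Context: A poset $P$ is $(3+1)$-free if there are no $a,b,c,d\in P$ with $a<b<c$ and $d$ incomparable to each of $a,b,c$. For $a\in P$ let $D_a=\{x\in P: x<a\}$ and $U_a=\{x\in P: x>a\}$. Write $a\mathrel{\top} b$ if neither of the sets $D_a,D_b$ contains the other, and $a\mathrel{\bot} b$ if neither of the sets $U_a,U_b$ contains the other. Write $a\approx b$ (clones) if $D_a=D_b$ and $U_a=U_b$. The view of $a$ is $v(a)=(D_a,P\setminus U_a)$; views are ordered by $v(a)\le v(b)$ iff $D_a\subseteq D_b$ and $U_a\supseteq U_b$, and $v(a),v(b)$ are incomparable if neither $v(a)\le v(b)$ nor $v(b)\le v(a)$. *)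

theory Defs
  imports Main
begin

definition strict_poset :: "'a set \<Rightarrow> ('a \<Rightarrow> 'a \<Rightarrow> bool) \<Rightarrow> bool" where
  "strict_poset P lt \<longleftrightarrow>
     (\<forall>x\<in>P. \<not> lt x x) \<and>
     (\<forall>x\<in>P. \<forall>y\<in>P. \<forall>z\<in>P. lt x y \<and> lt y z \<longrightarrow> lt x z)"

definition incomp :: "('a \<Rightarrow> 'a \<Rightarrow> bool) \<Rightarrow> 'a \<Rightarrow> 'a \<Rightarrow> bool" where
  "incomp lt x y \<longleftrightarrow> x \<noteq> y \<and> \<not> lt x y \<and> \<not> lt y x"

definition free_3_1 :: "'a set \<Rightarrow> ('a \<Rightarrow> 'a \<Rightarrow> bool) \<Rightarrow> bool" where
  "free_3_1 P lt \<longleftrightarrow> \<not> (\<exists>a\<in>P. \<exists>b\<in>P. \<exists>c\<in>P. \<exists>d\<in>P.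
      lt a b \<and> lt b c \<and> incomp lt d a \<and> incomp lt d b \<and> incomp lt d c)"

definition down :: "'a set \<Rightarrow> ('a \<Rightarrow> 'a \<Rightarrow> bool) \<Rightarrow> 'a \<Rightarrow> 'a set" where
  "down P lt a = {x\<in>P. lt x a}"

definition up :: "'a set \<Rightarrow> ('a \<Rightarrow> 'a \<Rightarrow> bool) \<Rightarrow> 'a \<Rightarrow> 'a set" where
  "up P lt a = {x\<in>P. lt a x}"

definition top_rel :: "'a set \<Rightarrow> ('a \<Rightarrow> 'a \<Rightarrow> bool) \<Rightarrow> 'a \<Rightarrow> 'a \<Rightarrow> bool" where
  "top_rel P lt a b \<longleftrightarrow> \<not> down P lt a \<subseteq> down P lt b \<and> \<not> down P lt b \<subseteq> down P lt a"

definition bot_rel :: "'a set \<Rightarrow> ('a \<Rightarrow> 'a \<Rightarrow> bool) \<Rightarrow> 'a \<Rightarrow> 'a \<Rightarrow> bool" where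
  "bot_rel P lt a b \<longleftrightarrow> \<not> up P lt a \<subseteq> up P lt b \<and> \<not> up P lt b \<subseteq> up P lt a"

definition clone :: "'a set \<Rightarrow> ('a \<Rightarrow> 'a \<Rightarrow> bool) \<Rightarrow> 'a \<Rightarrow> 'a \<Rightarrow> bool" where
  "clone P lt a b \<longleftrightarrow> down P lt a = down P lt b \<and> up P lt a = up P lt b"

definition view :: "'a set \<Rightarrow> ('a \<Rightarrow> 'a \<Rightarrow> bool) \<Rightarrow> 'a \<Rightarrow> 'a set \<times> 'a set" where
  "view P lt a = (down P lt a, P - up P lt a)"

text \<open>v(a) \<le> v(b) iff D_a \<subseteq> D_b and U_a \<supseteq> U_b, i.e. componentwise inclusion of views.\<close>
definition view_le :: "'a set \<times> 'a set \<Rightarrow> 'a set \<times> 'a set \<Rightarrow> bool" where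
  "view_le v w \<longleftrightarrow> fst v \<subseteq> fst w \<and> snd v \<subseteq> snd w"

definition view_incomparable :: "'a set \<times> 'a set \<Rightarrow> 'a set \<times> 'a set \<Rightarrow> bool" where
  "view_incomparable v w \<longleftrightarrow> \<not> view_le v w \<and> \<not> view_le w v"

end

theory Submission
  imports Defs
begin

text \<open>Every part beyond the bookkeeping ones is a single application of (3+1)-freeness in the
  following form: an element that is neither above the bottom nor below the top of a chain
  \<open>x < m < z\<close> must be comparable with its middle \<open>m\<close>. Parts (iv) and (v) are dual to each other,
  (vi) reduces to the fact that \<open>D\<^sub>a \<subseteq> D\<^sub>b\<close> and \<open>U\<^sub>a \<subseteq> U\<^sub>b\<close> force one of the inclusions to be an
  equality, and (vii) combines (iv) and (v).\<close>

lemma strict_poset_irrefl: "strict_poset P lt \<Longrightarrow> x \<in> P \<Longrightarrow> \<not> lt x x"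
  unfolding strict_poset_def by blast

lemma strict_poset_trans:
  "strict_poset P lt \<Longrightarrow> x \<in> P \<Longrightarrow> y \<in> P \<Longrightarrow> z \<in> P \<Longrightarrow> lt x y \<Longrightarrow> lt y z \<Longrightarrow> lt x z"
  unfolding strict_poset_def by blast

lemma free_3_1_comparable_middle:
  assumes "strict_poset P lt" "free_3_1 P lt"
    and "x \<in> P" "m \<in> P" "z \<in> P" "d \<in> P"
    and "lt x m" "lt m z" "\<not> lt x d" "\<not> lt d z"
  shows "d = m \<or> lt d m \<or> lt m d"
proof -
  have "lt x z"
    using strict_poset_trans[OF assms(1,3,4,5,7,8)] .
  moreover have "\<not> lt d x" and "\<not> lt z d"
    using strict_poset_trans[OF assms(1,6,3,5) _ \<open>lt x z\<close>]
      strict_poset_trans[OF assms(1,3,5,6) \<open>lt x z\<close>] assms(9,10) by blast+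
  ultimately have "incomp lt d x" "incomp lt d z"
    using assms(9,10) unfolding incomp_def by auto
  then have "\<not> incomp lt d m"
    using assms unfolding free_3_1_def by blast
  then show ?thesis
    unfolding incomp_def by blast
qed

lemma strict_poset_converse: "strict_poset P lt \<Longrightarrow> strict_poset P (\<lambda>x y. lt y x)"
  unfolding strict_poset_def by blast

lemma free_3_1_converse: "free_3_1 P lt \<Longrightarrow> free_3_1 P (\<lambda>x y. lt y x)"
  unfolding free_3_1_def incomp_def by blast

lemma down_converse: "down P (\<lambda>x y. lt y x) a = up P lt a"
  unfolding down_def up_def by simp

lemma up_converse: "up P (\<lambda>x y. lt y x) a = down P lt a"
  unfolding down_def up_def by simp

lemma top_rel_converse: "top_rel P (\<lambda>x y. lt y x) a b \<longleftrightarrow> bot_rel P lt a b"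
  unfolding top_rel_def bot_rel_def down_converse ..

lemma top_rel_sym: "top_rel P lt a b \<Longrightarrow> top_rel P lt b a"
  unfolding top_rel_def by blast

lemma top_rel_up_subset:
  assumes sp: "strict_poset P lt" and free: "free_3_1 P lt" and "a \<in> P" "b \<in> P"
    and top: "top_rel P lt a b"
  shows "up P lt a \<subseteq> up P lt b"
proof
  fix z assume "z \<in> up P lt a"
  then have z: "z \<in> P" "lt a z" unfolding up_def by auto
  obtain x where x: "x \<in> P" "lt x a" "\<not> lt x b"
    using top unfolding top_rel_def down_def by blast
  obtain y where y: "y \<in> P" "lt y b" "\<not> lt y a"
    using top unfolding top_rel_def down_def by blast
  show "z \<in> up P lt b"
  proof (rule ccontr)
    assume "z \<notin> up P lt b"
    with z have "\<not> lt b z" unfolding up_def by auto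
    then have "b = a \<or> lt b a \<or> lt a b"
      using free_3_1_comparable_middle[OF sp free x(1) \<open>a \<in> P\<close> z(1) \<open>b \<in> P\<close> x(2) z(2) x(3)]
      by blast
    then show False
      using x y strict_poset_trans[OF sp x(1) \<open>a \<in> P\<close> \<open>b \<in> P\<close> x(2)]
        strict_poset_trans[OF sp y(1) \<open>b \<in> P\<close> \<open>a \<in> P\<close> y(2)] by blast
  qed
qed

lemma top_rel_up_eq:
  assumes "strict_poset P lt" "free_3_1 P lt" "a \<in> P" "b \<in> P" "top_rel P lt a b"
  shows "up P lt a = up P lt b"
  using top_rel_up_subset[OF assms] top_rel_up_subset[OF assms(1,2,4,3) top_rel_sym[OF assms(5)]]
  by (rule subset_antisym)

lemma bot_rel_down_eq:
  assumes "strict_poset P lt" "free_3_1 P lt" "a \<in> P" "b \<in> P" "bot_rel P lt a b"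
  shows "down P lt a = down P lt b"
proof -
  have "top_rel P (\<lambda>x y. lt y x) a b"
    using assms(5) unfolding top_rel_converse .
  then have "up P (\<lambda>x y. lt y x) a = up P (\<lambda>x y. lt y x) b"
    by (rule top_rel_up_eq[OF strict_poset_converse[OF assms(1)] free_3_1_converse[OF assms(2)] assms(3,4)])
  then show ?thesis
    unfolding up_converse .
qed

lemma not_top_rel_and_bot_rel:
  assumes sp: "strict_poset P lt" and free: "free_3_1 P lt" and "a \<in> P" "b \<in> P" "c \<in> P"
  shows "\<not> (top_rel P lt a b \<and> bot_rel P lt b c)"
proof
  assume rels: "top_rel P lt a b \<and> bot_rel P lt b c"
  then have U: "up P lt a = up P lt b" and D: "down P lt b = down P lt c"
    using top_rel_up_eq[OF sp free \<open>a \<in> P\<close> \<open>b \<in> P\<close>]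
      bot_rel_down_eq[OF sp free \<open>b \<in> P\<close> \<open>c \<in> P\<close>] by blast+
  obtain x where x: "x \<in> P" "lt x a" "\<not> lt x b"
    using rels unfolding top_rel_def down_def by blast
  obtain z where z: "z \<in> P" "lt b z" "\<not> lt c z"
    using rels unfolding bot_rel_def up_def by blast
  have "lt a z" and "\<not> lt x c"
    using U D x z unfolding up_def down_def by blast+
  then have "c = a \<or> lt c a \<or> lt a c"
    using free_3_1_comparable_middle[OF sp free x(1) \<open>a \<in> P\<close> z(1) \<open>c \<in> P\<close> x(2)] z(3) by blast
  moreover have "\<not> lt a c"
  proof
    assume "lt a c"
    with D \<open>a \<in> P\<close> have "lt a b" unfolding down_def by blast
    with U \<open>b \<in> P\<close> have "lt b b" unfolding up_def by blast
    with strict_poset_irrefl[OF sp \<open>b \<in> P\<close>] show False by blast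
  qed
  ultimately show False
    using x z \<open>lt a z\<close> strict_poset_trans[OF sp \<open>c \<in> P\<close> \<open>a \<in> P\<close> z(1) _ \<open>lt a z\<close>] by blast
qed

lemma view_le_view_iff:
  "view_le (view P lt a) (view P lt b) \<longleftrightarrow> down P lt a \<subseteq> down P lt b \<and> up P lt b \<subseteq> up P lt a"
  unfolding view_le_def view_def up_def by auto

lemma down_up_subset_imp_eq:
  assumes sp: "strict_poset P lt" and free: "free_3_1 P lt" and "a \<in> P" "b \<in> P"
    and "down P lt a \<subseteq> down P lt b" "up P lt a \<subseteq> up P lt b"
  shows "down P lt a = down P lt b \<or> up P lt a = up P lt b"
proof (rule ccontr)
  assume "\<not> ?thesis"
  with assms(5,6) obtain x z where x: "x \<in> P" "lt x b" "\<not> lt x a"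
    and z: "z \<in> P" "lt b z" "\<not> lt a z"
    unfolding down_def up_def by blast
  then have "a = b \<or> lt a b \<or> lt b a"
    using free_3_1_comparable_middle[OF sp free x(1) \<open>b \<in> P\<close> z(1) \<open>a \<in> P\<close>] by blast
  then show False
    using x z strict_poset_trans[OF sp \<open>a \<in> P\<close> \<open>b \<in> P\<close> z(1) _ z(2)]
      strict_poset_trans[OF sp x(1) \<open>b \<in> P\<close> \<open>a \<in> P\<close> x(2)] by blast
qed

lemma view_incomparable_iff:
  assumes "strict_poset P lt" "free_3_1 P lt" "a \<in> P" "b \<in> P"
  shows "view_incomparable (view P lt a) (view P lt b) \<longleftrightarrow> top_rel P lt a b \<or> bot_rel P lt a b"
  using down_up_subset_imp_eq[OF assms] down_up_subset_imp_eq[OF assms(1,2,4,3)]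
  unfolding view_incomparable_def view_le_view_iff top_rel_def bot_rel_def by blast

theorem lemma2p6:
  fixes P :: "'a set" and lt :: "'a \<Rightarrow> 'a \<Rightarrow> bool" and a b c :: 'a
  assumes "finite P" and "strict_poset P lt" and "free_3_1 P lt"
    and "a \<in> P" and "b \<in> P" and "c \<in> P"
  shows "(clone P lt a b \<and> clone P lt b c \<longrightarrow> clone P lt a c)
    \<and> (top_rel P lt a b \<and> clone P lt b c \<longrightarrow> top_rel P lt a c)
    \<and> (bot_rel P lt a b \<and> clone P lt b c \<longrightarrow> bot_rel P lt a c)
    \<and> (top_rel P lt a b \<longrightarrow> up P lt a = up P lt b)
    \<and> (bot_rel P lt a b \<longrightarrow> down P lt a = down P lt b)
    \<and> (view_incomparable (view P lt a) (view P lt b) \<longleftrightarrow> top_rel P lt a b \<or> bot_rel P lt a b)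
    \<and> \<not> (top_rel P lt a b \<and> bot_rel P lt b c)"
proof (intro conjI impI)
  show "clone P lt a c" if "clone P lt a b \<and> clone P lt b c"
    using that unfolding clone_def by simp
  show "top_rel P lt a c" if "top_rel P lt a b \<and> clone P lt b c"
    using that unfolding clone_def top_rel_def by auto
  show "bot_rel P lt a c" if "bot_rel P lt a b \<and> clone P lt b c"
    using that unfolding clone_def bot_rel_def by auto
qed (use top_rel_up_eq[OF assms(2-5)] bot_rel_down_eq[OF assms(2-5)]
      view_incomparable_iff[OF assms(2-5)] not_top_rel_and_bot_rel[OF assms(2-6)] in blast)+

end
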